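(* Let $\Omega\subset\mathbb{R}^2$ be compact with non-empty interior. If $h\ge 2\,\mathrm{diam}(\Omega)$, then $\Omega$ has a unique solid angle center of height $h$.
   Context: $A_\Omega^{(h)}(x)=\int_\Omega \frac{h}{(|y-x|^2+h^2)^{3/2}}\,dy$ for $x\in\mathbb{R}^2$, $h>0$; a solid angle center of $\Omega$ of height $h$ is a point maximizing $A_\Omega^{(h)}$ over $\mathbb{R}^2$. *)

theory Defs
  imports "HOL-Analysis.Analysis"
begin

definition solid_angle :: "(real^2) set \<Rightarrow> real \<Rightarrow> real^2 \<Rightarrow> real" where
  "solid_angle \<Omega> h x = integral \<Omega> (\<lambda>y. h / ((norm (y - x))\<^sup>2 + h\<^sup>2) powr (3/2))"

definition solid_angle_center :: "(real^2) set \<Rightarrow> real \<Rightarrow> real^2 \<Rightarrow> bool" where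
  "solid_angle_center \<Omega> h c \<longleftrightarrow> (\<forall>x. solid_angle \<Omega> h x \<le> solid_angle \<Omega> h c)"

end

theory Submission
  imports Defs
begin

(* Write A(x) = \<integral>_\<Omega> k(y - x) dy with the kernel k(v) = h / (|v|^2 + h^2)^(3/2), and let
   K = \<Inter>_{y\<in>\<Omega>} cball y (h/2).  K is compact and convex, and it contains \<Omega> because
   diam \<Omega> \<le> h/2.  The proof has three ingredients:
   (1) Projecting a point x \<notin> K onto K moves it strictly closer to every point of K, hence of
       \<Omega>; since k is radially decreasing, A strictly increases.  So the continuous function A
       attains its maximum on the compact set K, and every maximizer lies in K.
   (2) Along a segment t \<mapsto> y - (a + t(b - a)) whose endpoints have length \<le> h/2, the
       function t \<mapsto> (|\<dots>|^2 + h^2)^(-3/2) is strictly concave; this is a second-derivative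
       computation.  Hence for distinct a, b \<in> K the midpoint m satisfies
       k(y - a) + k(y - b) < 2 k(y - m) for every y \<in> \<Omega>.
   (3) Integrating the strict inequality (\<Omega> has non-empty interior) gives
       A(a) + A(b) < 2 A(m), so two distinct maximizers cannot exist. *)

section \<open>A strict midpoint concavity criterion\<close>

lemma midpoint_concave_second_derivative:
  fixes f f' f'' :: "real \<Rightarrow> real"
  assumes df: "\<And>t. 0 \<le> t \<Longrightarrow> t \<le> 1 \<Longrightarrow> (f has_real_derivative f' t) (at t)"
    and df': "\<And>t. 0 \<le> t \<Longrightarrow> t \<le> 1 \<Longrightarrow> (f' has_real_derivative f'' t) (at t)"
    and neg: "\<And>t. 0 < t \<Longrightarrow> t < 1 \<Longrightarrow> f'' t < 0"
  shows "f 0 + f 1 < 2 * f (1/2)"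
proof -
  obtain s where s: "0 < s" "s < 1/2" "f (1/2) - f 0 = (1/2) * f' s"
    using MVT2[of 0 "1/2" f f'] df by auto
  obtain u where u: "1/2 < u" "u < 1" "f 1 - f (1/2) = (1/2) * f' u"
    using MVT2[of "1/2" 1 f f'] df by auto
  have "f' s > f' u"
  proof (rule DERIV_neg_imp_decreasing[of s u f'])
    fix x assume "s \<le> x" "x \<le> u"
    then show "\<exists>y. (f' has_real_derivative y) (at x) \<and> y < 0"
      using s u df' neg by (intro exI[of _ "f'' x"]) auto
  qed (use s u in simp)
  then show ?thesis using s u by simp
qed

text \<open>The second derivative of \<open>P(t)^(-3/2)\<close> is \<open>(3/4) P^(-7/2) (5 P'^2 - 2 P P'')\<close>; so this
  power of a positive function is strictly midpoint concave wherever \<open>5 P'^2 < 2 P P''\<close>.\<close>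
lemma powr_neg_three_halves_midpoint:
  fixes P P' P'' :: "real \<Rightarrow> real"
  assumes dP: "\<And>t. (P has_real_derivative P' t) (at t)"
    and dP': "\<And>t. (P' has_real_derivative P'' t) (at t)"
    and pos: "\<And>t. P t > 0"
    and concave: "\<And>t. 0 < t \<Longrightarrow> t < 1 \<Longrightarrow> 5 * (P' t)\<^sup>2 < 2 * P t * P'' t"
  shows "P 0 powr (-3/2) + P 1 powr (-3/2) < 2 * P (1/2) powr (-3/2)"
proof (rule midpoint_concave_second_derivative)
  fix t :: real
  show "((\<lambda>t. P t powr (-3/2)) has_real_derivative (-3/2) * (P t powr (-5/2) * P' t)) (at t)"
    using DERIV_fun_powr[OF dP pos, of "-3/2" t] by (simp add: mult.assoc)
  have "((\<lambda>t. P t powr (-5/2)) has_real_derivative (-5/2) * P t powr (-7/2) * P' t) (at t)"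
    using DERIV_fun_powr[OF dP pos, of "-5/2" t] by simp
  note D = DERIV_cmult[OF DERIV_mult[OF this dP'], of "-3/2"]
  have "P t powr (-5/2) = P t * P t powr (-7/2)"
    using powr_add[of "P t" 1 "-7/2"] pos[of t] by simp
  then have eq: "-3/2 * ((-5/2) * P t powr (-7/2) * P' t * P' t + P'' t * P t powr (-5/2)) =
      (3/4) * P t powr (-7/2) * (5 * (P' t)\<^sup>2 - 2 * P t * P'' t)"
    by (simp add: algebra_simps power2_eq_square)
  show "((\<lambda>t. (-3/2) * (P t powr (-5/2) * P' t)) has_real_derivative
          (3/4) * P t powr (-7/2) * (5 * (P' t)\<^sup>2 - 2 * P t * P'' t)) (at t)"
    using D unfolding eq .
next
  fix t :: real assume "0 < t" "t < 1"
  then have "5 * (P' t)\<^sup>2 - 2 * P t * P'' t < 0" using concave by simp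
  moreover have "P t powr (-7/2) > 0" using pos[of t] by simp
  ultimately show "(3/4) * P t powr (-7/2) * (5 * (P' t)\<^sup>2 - 2 * P t * P'' t) < 0"
    by (simp add: mult_pos_neg)
qed

section \<open>The solid angle kernel\<close>

definition solid_angle_kernel :: "real \<Rightarrow> 'a::real_normed_vector \<Rightarrow> real" where
  "solid_angle_kernel h v = h / ((norm v)\<^sup>2 + h\<^sup>2) powr (3/2)"

lemma solid_angle_eq_kernel_integral:
  "solid_angle \<Omega> h x = integral \<Omega> (\<lambda>y. solid_angle_kernel h (y - x))"
  by (simp add: solid_angle_def solid_angle_kernel_def)

lemma solid_angle_kernel_powr:
  "solid_angle_kernel h v = h * ((norm v)\<^sup>2 + h\<^sup>2) powr (-3/2)"
  by (simp add: solid_angle_kernel_def powr_minus_divide)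

lemma solid_angle_kernel_pos: "h > 0 \<Longrightarrow> solid_angle_kernel h v > 0"
  unfolding solid_angle_kernel_def by (simp add: add_nonneg_pos)

lemma solid_angle_kernel_le: "h > 0 \<Longrightarrow> solid_angle_kernel h v \<le> h / (h\<^sup>2) powr (3/2)"
  unfolding solid_angle_kernel_def
  by (intro divide_left_mono powr_mono2) (auto simp: add_nonneg_pos)

lemma solid_angle_kernel_strict_decreasing:
  assumes "h > 0" "norm u < norm v"
  shows "solid_angle_kernel h v < solid_angle_kernel h u"
proof -
  have "(norm u)\<^sup>2 < (norm v)\<^sup>2" using assms by (simp add: power_strict_mono)
  then have "((norm u)\<^sup>2 + h\<^sup>2) powr (3/2) < ((norm v)\<^sup>2 + h\<^sup>2) powr (3/2)"
    by (intro powr_less_mono2) auto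
  moreover have "((norm u)\<^sup>2 + h\<^sup>2) powr (3/2) > 0" using assms by (simp add: add_nonneg_pos)
  ultimately show ?thesis unfolding solid_angle_kernel_def using assms
    by (intro divide_strict_left_mono) auto
qed

lemma continuous_on_solid_angle_kernel [continuous_intros]:
  "continuous_on S g \<Longrightarrow> h > 0 \<Longrightarrow> continuous_on S (\<lambda>y. solid_angle_kernel h (g y))"
  unfolding solid_angle_kernel_def by (intro continuous_intros) (auto simp: add_nonneg_pos)

lemma norm_diff_scaleR_squared:
  fixes z d :: "'a::real_inner"
  shows "(norm (z - t *\<^sub>R d))\<^sup>2 = (norm z)\<^sup>2 - 2 * t * (z \<bullet> d) + t\<^sup>2 * (norm d)\<^sup>2"
  unfolding power2_norm_eq_inner
  by (simp add: inner_diff_left inner_diff_right inner_commute algebra_simps power2_eq_square)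

lemma norm_segment_interior_less:
  fixes z d :: "'a::real_inner"
  assumes "d \<noteq> 0" "0 < t" "t < 1" and z: "norm z \<le> r" "norm (z - d) \<le> r"
  shows "(norm (z - t *\<^sub>R d))\<^sup>2 < r\<^sup>2"
proof -
  have "(norm (z - t *\<^sub>R d))\<^sup>2
        = (1 - t) * (norm z)\<^sup>2 + t * (norm (z - 1 *\<^sub>R d))\<^sup>2 - t * (1 - t) * (norm d)\<^sup>2"
    unfolding norm_diff_scaleR_squared by (simp add: algebra_simps power2_eq_square)
  also have "\<dots> < (1 - t) * (norm z)\<^sup>2 + t * (norm (z - 1 *\<^sub>R d))\<^sup>2"
    using assms by simp
  also have "\<dots> \<le> (1 - t) * r\<^sup>2 + t * r\<^sup>2"
    using assms by (intro add_mono mult_left_mono power_mono) auto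
  finally show ?thesis by (simp add: algebra_simps)
qed

text \<open>Along the
  segment, \<open>P(t) = |y - a - t(b - a)|^2 + h^2\<close> satisfies \<open>5 P'^2 < 2 P P''\<close> by Cauchy-Schwarz
  and strict convexity of the squared distance.\<close>
lemma solid_angle_kernel_midpoint_strict:
  fixes y a b :: "'a::real_inner"
  assumes h: "h > 0" and "a \<noteq> b"
    and ya: "norm (y - a) \<le> h/2" and yb: "norm (y - b) \<le> h/2"
  shows "solid_angle_kernel h (y - a) + solid_angle_kernel h (y - b)
         < 2 * solid_angle_kernel h (y - midpoint a b)"
proof -
  define z where "z = y - a"
  define d where "d = b - a"
  define q where "q t = (norm (z - t *\<^sub>R d))\<^sup>2" for t
  define P where "P t = q t + h\<^sup>2" for t
  have q_expand: "q t = (norm z)\<^sup>2 - 2 * t * (z \<bullet> d) + t\<^sup>2 * (norm d)\<^sup>2" for t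
    unfolding q_def by (rule norm_diff_scaleR_squared)
  have "d \<noteq> 0" using \<open>a \<noteq> b\<close> by (simp add: d_def)
  then have d_pos: "(norm d)\<^sup>2 > 0" by simp
  have pos: "P t > 0" for t unfolding P_def q_def using h by (simp add: add_nonneg_pos)
  have dP: "(P has_real_derivative 2 * (t * (norm d)\<^sup>2 - z \<bullet> d)) (at t)" for t
    unfolding P_def[abs_def] q_expand by (auto intro!: derivative_eq_intros simp: algebra_simps)
  have dP': "((\<lambda>t. 2 * (t * (norm d)\<^sup>2 - z \<bullet> d)) has_real_derivative 2 * (norm d)\<^sup>2) (at t)" for t
    by (auto intro!: derivative_eq_intros)
  have concave: "5 * (2 * (t * (norm d)\<^sup>2 - z \<bullet> d))\<^sup>2 < 2 * P t * (2 * (norm d)\<^sup>2)"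
    if t: "0 < t" "t < 1" for t
  proof -
    have "q t < (h/2)\<^sup>2"
      unfolding q_def using \<open>d \<noteq> 0\<close> t ya yb
      by (intro norm_segment_interior_less) (auto simp: z_def d_def)
    then have q_lt: "4 * q t < h\<^sup>2" by (simp add: power_divide)
    have "(t * (norm d)\<^sup>2 - z \<bullet> d)\<^sup>2 = ((z - t *\<^sub>R d) \<bullet> d)\<^sup>2"
      unfolding power2_norm_eq_inner by (simp add: inner_diff_left power2_eq_square algebra_simps)
    also have "\<dots> \<le> q t * (norm d)\<^sup>2"
      unfolding q_def power2_norm_eq_inner by (rule Cauchy_Schwarz_ineq)
    finally have "5 * (t * (norm d)\<^sup>2 - z \<bullet> d)\<^sup>2 \<le> 5 * q t * (norm d)\<^sup>2" by simp
    also have "\<dots> < (q t + h\<^sup>2) * (norm d)\<^sup>2" using q_lt d_pos by simp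
    finally have "4 * (5 * (t * (norm d)\<^sup>2 - z \<bullet> d)\<^sup>2) < 4 * ((q t + h\<^sup>2) * (norm d)\<^sup>2)"
      by (simp add: mult.commute)
    moreover have "5 * (2 * (t * (norm d)\<^sup>2 - z \<bullet> d))\<^sup>2 = 4 * (5 * (t * (norm d)\<^sup>2 - z \<bullet> d)\<^sup>2)"
      unfolding power_mult_distrib by simp
    moreover have "2 * P t * (2 * (norm d)\<^sup>2) = 4 * ((q t + h\<^sup>2) * (norm d)\<^sup>2)"
      by (simp add: P_def)
    ultimately show ?thesis by (simp only:)
  qed
  have "P 0 powr (-3/2) + P 1 powr (-3/2) < 2 * P (1/2) powr (-3/2)"
    by (rule powr_neg_three_halves_midpoint[OF dP dP' pos concave])
  then have "h * (P 0 powr (-3/2) + P 1 powr (-3/2)) < h * (2 * P (1/2) powr (-3/2))"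
    using h by simp
  moreover have "midpoint a b = a + (1/2) *\<^sub>R (b - a)"
    unfolding midpoint_eq_iff scaleR_2[symmetric] by (simp add: algebra_simps scaleR_2)
  then have "y - b = z - 1 *\<^sub>R d" "y - midpoint a b = z - (1/2) *\<^sub>R d"
    by (simp_all add: z_def d_def)
  ultimately show ?thesis
    by (simp add: solid_angle_kernel_powr P_def q_def z_def algebra_simps)
qed

section \<open>Integrals over compact sets\<close>

lemma integrable_continuous_compact:
  fixes f :: "'a::euclidean_space \<Rightarrow> real"
  assumes "compact S" "continuous_on S f"
  shows "f integrable_on S"
  using set_borel_integral_eq_integral(1)[of S f] borel_integrable_compact[OF assms]
  unfolding set_integrable_def by blast

text \<open>Strict monotonicity of the integral over a compact set with non-empty interior: a
  pointwise strict inequality of continuous functions survives integration, because a small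
  box in the interior already contributes a positive amount.\<close>
lemma integral_strict_mono_compact:
  fixes f g :: "'a::euclidean_space \<Rightarrow> real"
  assumes S: "compact S" "interior S \<noteq> {}"
    and cont: "continuous_on S f" "continuous_on S g"
    and less: "\<And>y. y \<in> S \<Longrightarrow> f y < g y"
  shows "integral S f < integral S g"
proof -
  define e where "e y = g y - f y" for y
  have e_cont: "continuous_on S e" unfolding e_def using cont by (intro continuous_intros)
  obtain x where "x \<in> interior S" using S by auto
  then obtain a b where ab: "cbox a b \<subseteq> interior S" "x \<in> box a b"
    using open_contains_cbox[OF open_interior] by blast
  have sub: "cbox a b \<subseteq> S" using ab(1) interior_subset by blast
  have "integral (cbox a b) (\<lambda>_. 0) < integral (cbox a b) e"
    using ab(2) sub less
    by (intro integral_less continuous_on_subset[OF e_cont]) (auto simp: e_def dest: box_subset_cbox[THEN subsetD])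
  also have "\<dots> \<le> integral S e"
    using sub less by (intro integral_subset_le integrable_continuous_compact
        integrable_continuous continuous_on_subset[OF e_cont] S e_cont)
      (auto simp: e_def less_imp_le)
  finally have "0 < integral S e" by simp
  also have "integral S e = integral S g - integral S f"
    unfolding e_def using S cont by (intro integral_diff integrable_continuous_compact)
  finally show ?thesis by simp
qed

context
  fixes \<Omega> :: "(real^2) set" and h :: real
  assumes compact: "compact \<Omega>" and h: "h > 0"
begin

lemma integrable_solid_angle_kernel: "(\<lambda>y. solid_angle_kernel h (y - x)) integrable_on \<Omega>"
  using compact h by (intro integrable_continuous_compact continuous_intros)

text \<open>The solid angle function is continuous, by dominated convergence with the constant
  bound of the kernel.\<close>
lemma continuous_solid_angle: "continuous_on UNIV (solid_angle \<Omega> h)"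
proof (rule continuous_on_sequentiallyI)
  fix x :: "nat \<Rightarrow> real^2" and a
  assume x: "x \<longlonglongrightarrow> a"
  have kernel_isCont: "isCont (solid_angle_kernel h) v" for v :: "real^2"
    using continuous_on_solid_angle_kernel[OF continuous_on_id h, of "UNIV :: (real^2) set"]
    by (simp add: continuous_on_eq_continuous_at)
  have "(\<lambda>n. integral \<Omega> (\<lambda>y. solid_angle_kernel h (y - x n)))
        \<longlonglongrightarrow> integral \<Omega> (\<lambda>y. solid_angle_kernel h (y - a))"
  proof (rule dominated_convergence(2)[where h="\<lambda>_. h / (h\<^sup>2) powr (3/2)"])
    show "(\<lambda>_. h / (h\<^sup>2) powr (3/2)) integrable_on \<Omega>"
      using compact by (intro integrable_continuous_compact continuous_intros)
    show "norm (solid_angle_kernel h (y - x n)) \<le> h / (h\<^sup>2) powr (3/2)" for n y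
      using solid_angle_kernel_pos[OF h, of "y - x n"] solid_angle_kernel_le[OF h, of "y - x n"]
      by simp
    show "(\<lambda>n. solid_angle_kernel h (y - x n)) \<longlonglongrightarrow> solid_angle_kernel h (y - a)" for y
      by (rule isCont_tendsto_compose[OF kernel_isCont]) (intro tendsto_intros x)
  qed (rule integrable_solid_angle_kernel)
  then show "(\<lambda>n. solid_angle \<Omega> h (x n)) \<longlonglongrightarrow> solid_angle \<Omega> h a"
    by (simp add: solid_angle_eq_kernel_integral)
qed

lemma solid_angle_strict_closer:
  assumes interior: "interior \<Omega> \<noteq> {}"
    and closer: "\<And>y. y \<in> \<Omega> \<Longrightarrow> norm (y - p) < norm (y - x)"
  shows "solid_angle \<Omega> h x < solid_angle \<Omega> h p"
  unfolding solid_angle_eq_kernel_integral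
  using compact interior h closer
  by (intro integral_strict_mono_compact solid_angle_kernel_strict_decreasing continuous_intros)

lemma solid_angle_midpoint_strict:
  assumes interior: "interior \<Omega> \<noteq> {}" and "a \<noteq> b"
    and near: "\<And>y. y \<in> \<Omega> \<Longrightarrow> norm (y - a) \<le> h/2 \<and> norm (y - b) \<le> h/2"
  shows "solid_angle \<Omega> h a + solid_angle \<Omega> h b < 2 * solid_angle \<Omega> h (midpoint a b)"
proof -
  have "integral \<Omega> (\<lambda>y. solid_angle_kernel h (y - a) + solid_angle_kernel h (y - b))
        < integral \<Omega> (\<lambda>y. 2 * solid_angle_kernel h (y - midpoint a b))"
    using compact interior h \<open>a \<noteq> b\<close> near
    by (intro integral_strict_mono_compact solid_angle_kernel_midpoint_strict continuous_intros)
      auto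
  then show ?thesis
    by (simp add: solid_angle_eq_kernel_integral integral_add integrable_solid_angle_kernel)
qed

end

section \<open>The region containing all solid angle centers\<close>

definition common_cball :: "'a::metric_space set \<Rightarrow> real \<Rightarrow> 'a set" where
  "common_cball \<Omega> r = (\<Inter>y\<in>\<Omega>. cball y r)"

lemma mem_common_cball: "x \<in> common_cball \<Omega> r \<longleftrightarrow> (\<forall>y\<in>\<Omega>. dist y x \<le> r)"
  by (simp add: common_cball_def)

lemma convex_common_cball: "convex (common_cball (\<Omega> :: 'a::real_normed_vector set) r)"
  unfolding common_cball_def by (intro convex_INT convex_cball)

lemma compact_common_cball:
  fixes \<Omega> :: "'a::heine_borel set"
  assumes "\<Omega> \<noteq> {}"
  shows "compact (common_cball \<Omega> r)"
proof -
  obtain y where "y \<in> \<Omega>" using assms by blast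
  then have "common_cball \<Omega> r \<subseteq> cball y r" by (auto simp: common_cball_def)
  then have "bounded (common_cball \<Omega> r)" by (rule bounded_subset[OF bounded_cball])
  moreover have "closed (common_cball \<Omega> r)" unfolding common_cball_def by (intro closed_INT) auto
  ultimately show ?thesis by (simp add: compact_eq_bounded_closed)
qed

lemma subset_common_cball:
  assumes "bounded \<Omega>" "diameter \<Omega> \<le> r"
  shows "\<Omega> \<subseteq> common_cball \<Omega> r"
  using diameter_bounded_bound[OF assms(1)] assms(2)
  by (force simp: mem_common_cball)

text \<open>Projecting onto a closed convex set moves a point strictly closer to every point of the
  set; this follows from the obtuse-angle characterization of the closest point.\<close>
lemma closest_point_strictly_closer:
  fixes K :: "'a::euclidean_space set"
  assumes "convex K" "closed K" "y \<in> K" "x \<notin> K"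
  shows "norm (y - closest_point K x) < norm (y - x)"
proof -
  define p where "p = closest_point K x"
  have "p \<in> K" unfolding p_def using assms by (intro closest_point_in_set) auto
  then have "x \<noteq> p" using assms by blast
  have "(x - p) \<bullet> (y - p) \<le> 0" unfolding p_def by (rule closest_point_dot[OF assms(1-3)])
  moreover have "(norm (y - x))\<^sup>2 = (norm (y - p))\<^sup>2 - 2 * ((x - p) \<bullet> (y - p)) + (norm (x - p))\<^sup>2"
    using norm_diff_scaleR_squared[of "y - p" 1 "x - p"] by (simp add: inner_commute)
  moreover have "(norm (x - p))\<^sup>2 > 0" using \<open>x \<noteq> p\<close> by simp
  ultimately have "(norm (y - p))\<^sup>2 < (norm (y - x))\<^sup>2" by linarith
  then show ?thesis unfolding p_def by (rule power2_less_imp_less) simp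
qed

lemma global_max_within_compact:
  fixes f :: "'a::topological_space \<Rightarrow> real"
  assumes K: "compact K" "K \<noteq> {}" and cont: "continuous_on K f"
    and beaten: "\<And>x. x \<notin> K \<Longrightarrow> \<exists>p\<in>K. f x < f p"
  shows "\<exists>c. \<forall>x. f x \<le> f c" and "\<And>c. \<forall>x. f x \<le> f c \<Longrightarrow> c \<in> K"
proof -
  obtain c where "c \<in> K" and c: "\<And>x. x \<in> K \<Longrightarrow> f x \<le> f c"
    using continuous_attains_sup[OF K cont] by blast
  have "f x \<le> f c" for x
    using c beaten[of x] by (cases "x \<in> K") (auto intro: less_imp_le order.strict_trans2)
  then show "\<exists>c. \<forall>x. f x \<le> f c" by blast
  show "c \<in> K" if "\<forall>x. f x \<le> f c" for c
    using that by (meson beaten not_le)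
qed

theorem corollary4p4:
  fixes \<Omega> :: "(real^2) set" and h :: real
  assumes "compact \<Omega>" and "interior \<Omega> \<noteq> {}"
    and "h > 0" and "h \<ge> 2 * diameter \<Omega>"
  shows "\<exists>!c. solid_angle_center \<Omega> h c"
proof -
  define K where "K = common_cball \<Omega> (h/2)"
  have "\<Omega> \<noteq> {}" using assms(2) interior_subset by blast
  have "\<Omega> \<subseteq> K"
    using assms(1,4) unfolding K_def by (intro subset_common_cball compact_imp_bounded) auto
  then have K: "compact K" "convex K" "K \<noteq> {}" "\<Omega> \<subseteq> K"
    using \<open>\<Omega> \<noteq> {}\<close> by (auto simp: K_def compact_common_cball convex_common_cball)
  have beaten: "\<exists>p\<in>K. solid_angle \<Omega> h x < solid_angle \<Omega> h p" if "x \<notin> K" for x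
    using K \<open>x \<notin> K\<close> assms(1-3) compact_imp_closed
    by (intro bexI[of _ "closest_point K x"] solid_angle_strict_closer closest_point_strictly_closer
        closest_point_in_set) auto
  have "continuous_on K (solid_angle \<Omega> h)"
    using continuous_solid_angle[OF assms(1,3)] by (rule continuous_on_subset) simp
  note max = global_max_within_compact[OF K(1,3) this beaten]
  have midpoint_gt: "solid_angle \<Omega> h a + solid_angle \<Omega> h b < 2 * solid_angle \<Omega> h (midpoint a b)"
    if "a \<in> K" "b \<in> K" "a \<noteq> b" for a b
    using that assms(1-3) by (intro solid_angle_midpoint_strict)
      (auto simp: K_def mem_common_cball dist_norm norm_minus_commute)
  have unique: "a = b" if "\<forall>x. solid_angle \<Omega> h x \<le> solid_angle \<Omega> h a"
    and "\<forall>x. solid_angle \<Omega> h x \<le> solid_angle \<Omega> h b" for a b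
  proof -
    have "a \<in> K" "b \<in> K" using max(2) that by blast+
    then show "a = b"
      using that midpoint_gt[of a b] by (metis add_mono mult_2 not_less)
  qed
  show ?thesis
    unfolding solid_angle_center_def using max(1) unique by blast
qed

end
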